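(* Let $(X,\|\cdot\|)$ be a uniformly convex Banach space and let $\{v_n\}_{n\in\mathbb{N}}\subset X$ satisfy $\|v_{n+m}\|\le\|v_n+v_m\|$ for all $n,m\in\mathbb{N}$ and $\lim_{n\to\infty}\frac{\|v_n\|}{n}=1$. Then $v_n\neq 0$ for all $n$, and for every $\varepsilon>0$ there exists $N$ such that for all integers $n,m$ with $N\le n\le m\le 4n$ we have $$\left\|\frac{v_n}{\|v_n\|}-\frac{v_m}{\|v_m\|}\right\|<\varepsilon.$$
   Context: $\mathbb{N}=\{1,2,3,\dots\}$. A Banach space $X$ is uniformly convex if for every $\varepsilon>0$ there exists $\delta>0$ such that for all $u,v\in X$ with $\|u\|=\|v\|=1$ and $\|u-v\|\ge\varepsilon$ we have $\|u+v\|\le 2-\delta$. *)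

theory Defs
  imports "HOL-Analysis.Analysis"
begin

definition uniformly_convex :: "'a::real_normed_vector itself \<Rightarrow> bool" where
  "uniformly_convex _ \<longleftrightarrow>
     (\<forall>\<epsilon>>0. \<exists>\<delta>>0. \<forall>u v::'a. norm u = 1 \<and> norm v = 1 \<and> norm (u - v) \<ge> \<epsilon>
        \<longrightarrow> norm (u + v) \<le> 2 - \<delta>)"

end

theory Submission
  imports Defs
begin

text \<open>
  Write \<open>x\<^sub>n = sgn v\<^sub>n\<close>. For any two vectors \<open>p, q\<close> the triangle inequality gives
  \<open>\<parallel>p + q\<parallel> \<le> \<parallel>p\<parallel> + \<parallel>q\<parallel> - min \<parallel>p\<parallel> \<parallel>q\<parallel> (2 - \<parallel>sgn p + sgn q\<parallel>)\<close>.
  For \<open>n \<le> m \<le> 4n\<close> the norms \<open>\<parallel>v\<^sub>n\<parallel>, \<parallel>v\<^sub>m\<parallel>, \<parallel>v\<^sub>n\<^sub>+\<^sub>m\<parallel>\<close> are eventually within a factor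
  \<open>1 \<plusminus> \<eta>\<close> of \<open>n, m, n + m\<close>, and \<open>min \<parallel>v\<^sub>n\<parallel> \<parallel>v\<^sub>m\<parallel>\<close> is at least a fifth of \<open>n + m\<close>; so
  \<open>\<parallel>v\<^sub>n\<^sub>+\<^sub>m\<parallel> \<le> \<parallel>v\<^sub>n + v\<^sub>m\<parallel>\<close> forces \<open>2 - \<parallel>x\<^sub>n + x\<^sub>m\<parallel> < 20\<eta>\<close>, and uniform convexity
  turns this into \<open>\<parallel>x\<^sub>n - x\<^sub>m\<parallel> < \<epsilon>\<close>. Nonvanishing holds because \<open>v\<^sub>k = 0\<close> would make
  \<open>\<parallel>v\<^sub>1\<^sub>+\<^sub>j\<^sub>k\<parallel> \<le> \<parallel>v\<^sub>1\<parallel>\<close> bounded, against linear growth.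
\<close>

lemma norm_add_le_min_deficit:
  fixes p q :: "'a::real_normed_vector"
  shows "norm (p + q) \<le> norm p + norm q - min (norm p) (norm q) * (2 - norm (sgn p + sgn q))"
proof -
  have ordered: "norm (p + q) \<le> norm p + norm q - norm p * (2 - norm (sgn p + sgn q))"
    if le: "norm p \<le> norm q" for p q :: 'a
  proof -
    have polar: "norm x *\<^sub>R sgn x = x" for x :: 'a
      by (cases "x = 0") (simp_all add: sgn_div_norm)
    have "p + q = norm p *\<^sub>R (sgn p + sgn q) + (norm q - norm p) *\<^sub>R sgn q"
      by (simp add: algebra_simps polar)
    then have "norm (p + q) \<le> norm (norm p *\<^sub>R (sgn p + sgn q)) + norm ((norm q - norm p) *\<^sub>R sgn q)"
      by (metis norm_triangle_ineq)
    also have "\<dots> = norm p * norm (sgn p + sgn q) + (norm q - norm p) * norm (sgn q)"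
      using le by simp
    also have "\<dots> \<le> norm p * norm (sgn p + sgn q) + (norm q - norm p)"
      using le by (simp add: norm_sgn mult_left_le)
    finally show ?thesis
      by (simp add: algebra_simps)
  qed
  show ?thesis
    using ordered[of p q] ordered[of q p] by (cases "norm p \<le> norm q") (auto simp: add.commute min_def)
qed

lemma eventually_abs_diff_less_of_ratio_tendsto_1:
  fixes f :: "nat \<Rightarrow> real"
  assumes "((\<lambda>n. f n / real n) \<longlongrightarrow> 1) sequentially" and "\<eta> > 0"
  shows "eventually (\<lambda>n. \<bar>f n - real n\<bar> < \<eta> * real n) sequentially"
  using tendstoD[OF assms] eventually_gt_at_top[of 0]
proof eventually_elim
  case (elim n)
  then have "\<bar>(f n - real n) / real n\<bar> < \<eta>"
    by (simp add: dist_real_def diff_divide_distrib)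
  then show ?case
    using elim by (simp add: field_simps)
qed

lemma nonzero_of_subadditive_linear_growth:
  fixes v :: "nat \<Rightarrow> 'a::real_normed_vector"
  assumes sub: "\<And>n m. n \<ge> 1 \<Longrightarrow> m \<ge> 1 \<Longrightarrow> norm (v (n + m)) \<le> norm (v n + v m)"
    and lim: "((\<lambda>n. norm (v n) / real n) \<longlongrightarrow> c) sequentially" and "c \<noteq> 0"
    and "k \<ge> 1"
  shows "v k \<noteq> 0"
proof
  assume vk: "v k = 0"
  define r where "r j = 1 + j * k" for j
  have bounded: "norm (v (r j)) \<le> norm (v 1)" for j
  proof (induction j)
    case (Suc j)
    have "norm (v (r (Suc j))) = norm (v (r j + k))"
      by (simp add: r_def algebra_simps)
    also have "\<dots> \<le> norm (v (r j))"
      using sub[of "r j" k] \<open>k \<ge> 1\<close> vk by (simp add: r_def)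
    finally show ?case
      using Suc.IH by linarith
  qed (simp add: r_def)
  have "strict_mono r"
    using \<open>k \<ge> 1\<close> by (auto simp: strict_mono_def r_def)
  then have "((\<lambda>j. norm (v (r j)) / real (r j)) \<longlongrightarrow> c) sequentially"
    using LIMSEQ_subseq_LIMSEQ[OF lim] by (simp add: o_def)
  moreover have "((\<lambda>j. norm (v (r j)) / real (r j)) \<longlongrightarrow> 0) sequentially"
  proof (rule real_tendsto_sandwich[where f = "\<lambda>_. 0" and h = "\<lambda>j. norm (v 1) / real (r j)"])
    have "filterlim (\<lambda>j. real (r j)) at_top sequentially"
      using filterlim_compose[OF filterlim_real_sequentially filterlim_subseq[OF \<open>strict_mono r\<close>]]
      by (simp add: o_def)
    then show "((\<lambda>j. norm (v 1) / real (r j)) \<longlongrightarrow> 0) sequentially"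
      by (intro tendsto_divide_0[OF tendsto_const] filterlim_at_top_imp_at_infinity)
    show "\<forall>\<^sub>F j in sequentially. norm (v (r j)) / real (r j) \<le> norm (v 1) / real (r j)"
      using bounded by (simp add: divide_right_mono)
  qed simp_all
  ultimately show False
    using \<open>c \<noteq> 0\<close> LIMSEQ_unique by blast
qed

lemma norm_sgn_add_gt:
  fixes v :: "nat \<Rightarrow> 'a::real_normed_vector"
  assumes sub: "norm (v (n + m)) \<le> norm (v n + v m)"
    and close: "\<And>k. k \<in> {n, m, n + m} \<Longrightarrow> \<bar>norm (v k) - real k\<bar> < \<eta> * real k"
    and "n \<le> m" "m \<le> 4 * n" "\<eta> \<le> 1/2"
  shows "2 - 20 * \<eta> < norm (sgn (v n) + sgn (v m))"
proof -
  define S where "S = real n + real m"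
  define D where "D = 2 - norm (sgn (v n) + sgn (v m))"
  have "norm (sgn (v n)) \<le> 1" "norm (sgn (v m)) \<le> 1"
    by (simp_all add: norm_sgn)
  then have "norm (sgn (v n) + sgn (v m)) \<le> 2"
    using norm_triangle_ineq[of "sgn (v n)" "sgn (v m)"] by linarith
  then have "D \<ge> 0"
    by (simp add: D_def)
  have n: "\<bar>norm (v n) - real n\<bar> < \<eta> * real n"
    and m: "\<bar>norm (v m) - real m\<bar> < \<eta> * real m"
    and nm: "\<bar>norm (v (n + m)) - S\<bar> < \<eta> * S"
    using close[of n] close[of m] close[of "n + m"] by (simp_all add: S_def)
  have "S > 0"
    using nm by (cases "S = 0") (auto simp: S_def)
  have "(1 - \<eta>) * real n < norm (v n)" "(1 - \<eta>) * real m < norm (v m)"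
    using n m by (auto simp: algebra_simps abs_less_iff)
  moreover have "(1 - \<eta>) * real n \<le> (1 - \<eta>) * real m"
    using \<open>n \<le> m\<close> \<open>\<eta> \<le> 1/2\<close> by (intro mult_left_mono) auto
  ultimately have "min (norm (v n)) (norm (v m)) \<ge> (1 - \<eta>) * real n"
    by linarith
  also have "(1 - \<eta>) * real n \<ge> S / 10"
    using \<open>m \<le> 4 * n\<close> \<open>\<eta> \<le> 1/2\<close> mult_right_mono[of "1/2" "1 - \<eta>" "real n"]
    by (simp add: S_def)
  finally have "S / 10 * D \<le> min (norm (v n)) (norm (v m)) * D"
    using \<open>D \<ge> 0\<close> by (intro mult_right_mono)
  moreover have "(1 - \<eta>) * S < norm (v n) + norm (v m) - min (norm (v n)) (norm (v m)) * D"
  proof -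
    have "(1 - \<eta>) * S < norm (v (n + m))"
      using nm by (auto simp: algebra_simps abs_less_iff)
    then show ?thesis
      using sub norm_add_le_min_deficit[of "v n" "v m"] unfolding D_def by linarith
  qed
  ultimately have "S * D < S * (20 * \<eta>)"
    using n m unfolding S_def by (simp add: algebra_simps)
  then show ?thesis
    using \<open>S > 0\<close> by (simp add: D_def)
qed

theorem mainTheorem4:
  fixes v :: "nat \<Rightarrow> 'a::banach"
  assumes "uniformly_convex TYPE('a)"
    and "\<And>n m. n \<ge> 1 \<Longrightarrow> m \<ge> 1 \<Longrightarrow> norm (v (n + m)) \<le> norm (v n + v m)"
    and "((\<lambda>n. norm (v n) / real n) \<longlongrightarrow> 1) sequentially"
  shows "(\<forall>n\<ge>1. v n \<noteq> 0) \<and>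
    (\<forall>\<epsilon>>0. \<exists>N. \<forall>n m. N \<le> n \<and> n \<le> m \<and> m \<le> 4 * n \<longrightarrow>
        norm (v n /\<^sub>R norm (v n) - v m /\<^sub>R norm (v m)) < \<epsilon>)"
proof (intro conjI allI impI)
  show nonzero: "v n \<noteq> 0" if "n \<ge> 1" for n
    using nonzero_of_subadditive_linear_growth[OF assms(2,3)] that by simp
  fix \<epsilon> :: real
  assume "\<epsilon> > 0"
  then obtain \<delta> where "\<delta> > 0" and convex: "\<And>x y :: 'a. norm x = 1 \<Longrightarrow> norm y = 1 \<Longrightarrow>
      \<epsilon> \<le> norm (x - y) \<Longrightarrow> norm (x + y) \<le> 2 - \<delta>"
    using assms(1) unfolding uniformly_convex_def by meson
  define \<eta> where "\<eta> = min (1/2) (\<delta> / 20)"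
  have "\<eta> > 0"
    using \<open>\<delta> > 0\<close> by (simp add: \<eta>_def)
  then obtain N where N: "\<And>k. k \<ge> N \<Longrightarrow> \<bar>norm (v k) - real k\<bar> < \<eta> * real k"
    using eventually_abs_diff_less_of_ratio_tendsto_1[OF assms(3)] by (auto simp: eventually_sequentially)
  have "norm (sgn (v n) - sgn (v m)) < \<epsilon>" if "max N 1 \<le> n" "n \<le> m" "m \<le> 4 * n" for n m
  proof (rule ccontr)
    assume "\<not> ?thesis"
    then have "norm (sgn (v n) + sgn (v m)) \<le> 2 - \<delta>"
      using convex nonzero that by (simp add: norm_sgn)
    moreover have "2 - 20 * \<eta> < norm (sgn (v n) + sgn (v m))"
      using that by (intro norm_sgn_add_gt assms(2) N) (auto simp: \<eta>_def)
    ultimately show False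
      by (simp add: \<eta>_def)
  qed
  then show "\<exists>N. \<forall>n m. N \<le> n \<and> n \<le> m \<and> m \<le> 4 * n \<longrightarrow>
      norm (v n /\<^sub>R norm (v n) - v m /\<^sub>R norm (v m)) < \<epsilon>"
    by (intro exI[of _ "max N 1"]) (simp add: sgn_div_norm)
qed

end
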